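(* Let $v=4\lambda+3$ be a prime, let $p$ be any prime divisor of $\lambda+1$, and let $t=\mathrm{ord}_v(p)$. Then the Paley design $\mathrm{Paley}(v)$ is additive under $\mathbb{Z}_p^t$.
   Context: For a prime $v=4\lambda+3$, the set of nonzero squares of $\mathbb{F}_v$ is a $(4\lambda+3,2\lambda+1,\lambda)$ difference set in $\mathbb{Z}_v$; $\mathrm{Paley}(v)$ is the associated symmetric design with point set $\mathbb{Z}_v$ and blocks all translates $\{s+i : s \text{ a nonzero square}\}$, $i\in\mathbb{Z}_v$. $\mathrm{ord}_v(p)$ is the multiplicative order of $p$ modulo $v$. A design $(V,\mathscr B)$ is additive under an abelian group $G$ if there is an injective map $f:V\to G$ such that $\sum_{x\in B}f(x)=0$ for every block $B\in\mathscr B$. *)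

theory Defs
  imports "HOL-Number_Theory.Number_Theory" "HOL-Algebra.Product_Groups" "HOL-Algebra.Elementary_Groups"
begin

definition nonzero_squares :: "nat \<Rightarrow> int set" where
  "nonzero_squares v = {s \<in> {1..<int v}. QuadRes (int v) s}"

definition paley_points :: "nat \<Rightarrow> int set" where
  "paley_points v = {0..<int v}"

definition paley_blocks :: "nat \<Rightarrow> int set set" where
  "paley_blocks v = {(\<lambda>s. (s + i) mod int v) ` nonzero_squares v | i. i \<in> {0..<int v}}"

text \<open>A design (V, B) is additive under the abelian group G (written multiplicatively,
  as in HOL-Algebra): an injective map f : V \<rightarrow> G whose values sum to the identity on every block.\<close>
definition additive_under :: "('g, 'm) monoid_scheme \<Rightarrow> 'a set \<Rightarrow> 'a set set \<Rightarrow> bool" where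
  "additive_under G V Bs \<longleftrightarrow>
     (\<exists>f. f \<in> V \<rightarrow> carrier G \<and> inj_on f V \<and> (\<forall>B\<in>Bs. finprod G f B = \<one>\<^bsub>G\<^esub>))"

definition Zp_power :: "nat \<Rightarrow> nat \<Rightarrow> (nat \<Rightarrow> int) monoid" where
  "Zp_power p t = product_group {..<t} (\<lambda>_. integer_mod_group p)"

end

theory Submission
  imports Defs "HOL-Computational_Algebra.Polynomial" "HOL-Algebra.Algebraic_Closure"
begin

hide_const (open) Divisibility.prime

text \<open>
  Work in the algebraic closure of the field with \<open>p\<close> elements and let \<open>\<omega>\<close> be a nontrivial
  \<open>v\<close>-th root of unity there. Write \<open>Q(x)\<close> and \<open>N(x)\<close> for the sums of \<open>x^s\<close> over the
  quadratic residues and non-residues \<open>s\<close> mod \<open>v\<close>. Substituting \<open>b = m a\<close> in \<open>Q N\<close> and counting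
  the pairs of consecutive residue classes gives \<open>Q(\<omega>) N(\<omega>) = (\<lambda> + 1) + \<lambda> (1 + \<omega> + \<dots> + \<omega>^(v-1))\<close>,
  which vanishes because \<open>p\<close> divides \<open>\<lambda> + 1\<close>. As \<open>-1\<close> is a non-residue, \<open>N(\<omega>) = Q(\<omega>\<inverse>)\<close>, so after
  possibly inverting \<open>\<omega>\<close> we get \<open>Q(\<omega>) = 0\<close>, and every block, a translate of the residues, sums to
  \<open>\<omega>^i Q(\<omega>) = 0\<close> under \<open>x \<mapsto> \<omega>^x\<close>.

  Since \<open>p^t \<equiv> 1 (mod v)\<close>, the Frobenius power \<open>y \<mapsto> y^(p^t)\<close> fixes every integer polynomial in \<open>\<omega>\<close>, so
  these form an additive group of at most \<open>p^t\<close> elements: the powers \<open>1, \<omega>, \<dots>, \<omega>^(d-1)\<close>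
  independent over the prime field satisfy \<open>d \<le> t\<close> and span all of them. Coordinates in this
  basis are an injective additive map into \<open>Z_p^t\<close>, and \<open>x \<mapsto> coordinates of \<omega>^x\<close> is the required
  labelling.
\<close>

section \<open>Evaluating integer polynomials in a ring\<close>

definition int_embed :: "('a, 'b) ring_scheme \<Rightarrow> int \<Rightarrow> 'a" where
  "int_embed R a = add_pow R a \<one>\<^bsub>R\<^esub>"

definition int_poly_eval :: "('a, 'b) ring_scheme \<Rightarrow> 'a \<Rightarrow> int poly \<Rightarrow> 'a" where
  "int_poly_eval R z q = foldr (\<lambda>a acc. int_embed R a \<oplus>\<^bsub>R\<^esub> z \<otimes>\<^bsub>R\<^esub> acc) (coeffs q) \<zero>\<^bsub>R\<^esub>"

context cring
begin

lemma int_embed_closed [simp]: "int_embed R a \<in> carrier R"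
  unfolding int_embed_def using add.int_pow_closed[OF one_closed] by simp

lemma int_embed_add: "int_embed R (a + b) = int_embed R a \<oplus> int_embed R b"
  unfolding int_embed_def using add.int_pow_mult[OF one_closed] by simp

lemma int_embed_0 [simp]: "int_embed R 0 = \<zero>"
  unfolding int_embed_def add_pow_def by simp

lemma int_embed_1 [simp]: "int_embed R 1 = \<one>"
  unfolding int_embed_def using add.int_pow_1[OF one_closed] by simp

lemma int_embed_mult: "int_embed R (a * b) = int_embed R a \<otimes> int_embed R b"
proof -
  have "int_embed R a \<otimes> int_embed R b = add_pow R a (\<one> \<otimes> int_embed R b)"
    unfolding int_embed_def by (rule add_pow_ldistr_int) (simp_all add: int_embed_def[symmetric])
  also have "\<dots> = add_pow R (b * a) \<one>"
    using add.int_pow_pow[OF one_closed] by (simp add: int_embed_def)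
  finally show ?thesis unfolding int_embed_def by (simp add: mult.commute)
qed

lemma int_poly_eval_pCons:
  assumes "z \<in> carrier R"
  shows "int_poly_eval R z (pCons a q) = int_embed R a \<oplus> z \<otimes> int_poly_eval R z q"
  using assms by (cases "a = 0 \<and> q = 0") (auto simp: int_poly_eval_def cCons_def)

lemma int_poly_eval_0 [simp]: "int_poly_eval R z 0 = \<zero>"
  by (simp add: int_poly_eval_def)

context
  fixes z assumes z: "z \<in> carrier R"
begin

lemma int_poly_eval_closed [simp]: "int_poly_eval R z q \<in> carrier R"
  by (induction q) (simp_all add: int_poly_eval_pCons z)

lemma int_poly_eval_const [simp]: "int_poly_eval R z [:a:] = int_embed R a"
  using int_poly_eval_pCons[OF z, of a 0] z by simp

lemma int_poly_eval_1 [simp]: "int_poly_eval R z 1 = \<one>"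
  using int_poly_eval_const[of 1] by (simp flip: one_pCons)

lemma int_poly_eval_add: "int_poly_eval R z (q + r) = int_poly_eval R z q \<oplus> int_poly_eval R z r"
proof (induction q arbitrary: r)
  case (pCons a q)
  obtain b r' where r: "r = pCons b r'" by (cases r) auto
  show ?case
    using pCons.IH[of r'] z by (simp add: r int_poly_eval_pCons int_embed_add r_distr a_ac)
qed simp

lemma int_poly_eval_smult: "int_poly_eval R z (smult c q) = int_embed R c \<otimes> int_poly_eval R z q"
  by (induction q) (simp_all add: int_poly_eval_pCons z int_embed_mult r_distr m_ac)

lemma int_poly_eval_mult: "int_poly_eval R z (q * r) = int_poly_eval R z q \<otimes> int_poly_eval R z r"
proof (induction q)
  case (pCons a q)
  then show ?case
    using z by (simp add: int_poly_eval_add int_poly_eval_smult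
        int_poly_eval_pCons l_distr m_assoc)
qed simp

lemma int_poly_eval_uminus: "int_poly_eval R z (- q) = \<ominus> int_poly_eval R z q"
  using int_poly_eval_add[of "- q" q] by (simp add: minus_equality)

lemma int_poly_eval_diff: "int_poly_eval R z (q - r) = int_poly_eval R z q \<ominus> int_poly_eval R z r"
  using int_poly_eval_add[of q "- r"] by (simp add: int_poly_eval_uminus a_minus_def)

lemma int_poly_eval_of_nat [simp]: "int_poly_eval R z (of_nat n) = int_embed R (int n)"
  by (simp add: of_nat_poly)

lemma int_poly_eval_monom: "int_poly_eval R z (Polynomial.monom c n) = int_embed R c \<otimes> z [^] n"
  by (induction n) (simp_all add: monom_0 monom_Suc int_poly_eval_pCons z m_ac)

lemma int_poly_eval_monom_1 [simp]: "int_poly_eval R z (Polynomial.monom 1 n) = z [^] n"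
  using int_poly_eval_monom[of 1 n] z by simp

lemma int_poly_eval_power: "int_poly_eval R z (q ^ n) = int_poly_eval R z q [^] n"
  by (induction n) (simp_all add: int_poly_eval_mult m_comm)

lemma int_poly_eval_sum_cong:
  assumes "finite A" and "\<And>i. i \<in> A \<Longrightarrow> int_poly_eval R z (f i) = int_poly_eval R z (g i)"
  shows "int_poly_eval R z (\<Sum>i\<in>A. f i) = int_poly_eval R z (\<Sum>i\<in>A. g i)"
  using assms by (induction A rule: finite_induct) (simp_all add: int_poly_eval_add)

end

lemma int_poly_eval_pcompose:
  assumes "z \<in> carrier R"
  shows "int_poly_eval R z (pcompose q r) = int_poly_eval R (int_poly_eval R z r) q"
  using assms
  by (induction q) (simp_all add: pcompose_pCons int_poly_eval_add int_poly_eval_mult int_poly_eval_pCons)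

end

section \<open>Prime characteristic\<close>

lemma int_fermat_little:
  fixes a :: int
  assumes "prime p"
  shows "[a ^ p = a] (mod int p)"
proof (cases "int p dvd a")
  case True
  then have "int p dvd a ^ p"
    using True prime_gt_0_nat[OF assms] by (metis dvd_power dvd_trans)
  then show ?thesis
    using True by (simp add: cong_def)
next
  case False
  define b where "b = nat (a mod int p)"
  have b: "int b = a mod int p"
    unfolding b_def using prime_gt_0_nat[OF assms] by simp
  then have "\<not> p dvd b"
    using False by (simp add: dvd_mod_iff flip: int_dvd_int_iff)
  then have "[b ^ (p - 1) = 1] (mod p)"
    using fermat_theorem[OF assms] by blast
  then have "[(a mod int p) ^ (p - 1) = 1] (mod int p)"
    unfolding b[symmetric] by (metis cong_int_iff of_nat_1 of_nat_power)
  then have "[a ^ (p - 1) = 1] (mod int p)"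
    by (simp add: cong_def power_mod)
  then have "[a ^ (p - 1) * a = a] (mod int p)"
    using cong_scalar_right by fastforce
  moreover have "a ^ (p - 1) * a = a ^ p"
    using prime_gt_0_nat[OF assms] by (simp flip: power_Suc2)
  ultimately show ?thesis by simp
qed

lemma add_power_prime:
  fixes a b :: "'a :: comm_ring_1"
  assumes "prime p"
  obtains w where "(a + b) ^ p = a ^ p + b ^ p + of_nat p * w"
proof -
  have p2: "p \<ge> 2" using prime_ge_2_nat[OF assms] .
  define f where "f k = of_nat (p choose k) * a ^ k * b ^ (p - k)" for k
  define w where "w = (\<Sum>k\<in>{1..<p}. of_nat ((p choose k) div p) * a ^ k * b ^ (p - k))"
  have inner: "f k = of_nat p * (of_nat ((p choose k) div p) * a ^ k * b ^ (p - k))"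
    if "k \<in> {1..<p}" for k
  proof -
    have "p dvd (p choose k)" using that assms by (intro dvd_choose_prime) auto
    then have "p choose k = p * ((p choose k) div p)" by simp
    then show ?thesis unfolding f_def by (metis mult.assoc of_nat_mult)
  qed
  have "{..p} = insert 0 (insert p {1..<p})" using p2 by auto
  then have "(a + b) ^ p = f 0 + (f p + (\<Sum>k\<in>{1..<p}. f k))"
    using p2 by (simp add: binomial_ring f_def)
  also have "(\<Sum>k\<in>{1..<p}. f k) = of_nat p * w"
    unfolding w_def by (simp add: inner sum_distrib_left)
  finally show ?thesis using that p2 by (simp add: f_def algebra_simps)
qed

lemma int_poly_power_prime:
  fixes q :: "int poly"
  assumes "prime p"
  obtains s where "q ^ p = pcompose q (Polynomial.monom 1 p) + smult (int p) s"
proof (induction q arbitrary: thesis)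
  case 0
  then show ?case using prime_gt_0_nat[OF assms] by (metis add_0 pcompose_0 smult_0_right zero_power)
next
  case (pCons a q)
  obtain s where s: "q ^ p = pcompose q (Polynomial.monom 1 p) + smult (int p) s"
    using pCons.IH by blast
  obtain w where w: "([:a:] + Polynomial.monom 1 1 * q) ^ p
      = [:a:] ^ p + (Polynomial.monom 1 1 * q) ^ p + of_nat p * w"
    using add_power_prime[OF assms] by blast
  obtain k where k: "a ^ p = a + int p * k"
    using int_fermat_little[OF assms, of a] by (metis cong_iff_lin cong_sym)
  have "pCons a q = [:a:] + Polynomial.monom 1 1 * q"
    by (simp add: monom_Suc)
  then have "pCons a q ^ p = [:a ^ p:] + Polynomial.monom 1 p * q ^ p + smult (int p) w"
    by (simp only: w) (simp add: power_mult_distrib monom_power poly_const_pow of_nat_mult_conv_smult)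
  also have "\<dots> = pcompose (pCons a q) (Polynomial.monom 1 p)
      + smult (int p) ([:k:] + Polynomial.monom 1 p * s + w)"
    unfolding s k by (simp add: pcompose_pCons algebra_simps smult_add_right)
  finally show ?case using pCons.prems by blast
qed

lemma (in field) fixed_points_power_bound:
  assumes "N \<ge> 2"
  shows "finite {y \<in> carrier R. y [^] N = y}" and "card {y \<in> carrier R. y [^] N = y} \<le> N"
proof -
  txt \<open>\<open>P\<close> is \<open>x^N - x\<close>, as a coefficient list with the leading coefficient first.\<close>
  define A where "A = \<one> # replicate (N - 2) \<zero>"
  define B where "B = [\<ominus> \<one>, \<zero>]"
  define P where "P = A @ B"
  have P: "P \<in> carrier (poly_ring R)"
    unfolding univ_poly_carrier[symmetric] polynomial_def P_def A_def B_def by auto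
  have "eval P y = y [^] N \<ominus> y" if y: "y \<in> carrier R" for y
  proof -
    have "eval P y = eval A y \<otimes> y [^] length B \<oplus> eval B y"
      unfolding P_def by (rule eval_append) (use y in \<open>auto simp: A_def B_def\<close>)
    also have "eval A y = \<one> \<otimes> y [^] (N - 2)"
      unfolding A_def using eval_monom[OF one_closed y, of "N - 2"] by (simp add: monom_def)
    also have "eval B y = \<ominus> y"
      unfolding B_def using y by (simp add: l_minus)
    also have "\<one> \<otimes> y [^] (N - 2) \<otimes> y [^] length B = y [^] (N - 2 + length B)"
      using y by (simp add: nat_pow_mult)
    also have "N - 2 + length B = N"
      using assms by (simp add: B_def)
    finally show ?thesis using y by (simp add: a_minus_def)
  qed
  then have sub: "{y \<in> carrier R. y [^] N = y} \<subseteq> set_mset (roots P)"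
    using roots_mem_iff_is_root[OF P] by (auto simp: is_root_def P_def A_def)
  then show "finite {y \<in> carrier R. y [^] N = y}"
    using finite_subset by blast
  have "card {y \<in> carrier R. y [^] N = y} \<le> card (set_mset (roots P))"
    by (rule card_mono[OF _ sub]) simp
  also have "\<dots> \<le> size (roots P)" by (metis mset_set_set_mset_msubset size_mset_mono size_mset_set)
  also have "\<dots> \<le> N" using size_roots_le_degree[OF P] assms by (simp add: P_def A_def B_def)
  finally show "card {y \<in> carrier R. y [^] N = y} \<le> N" .
qed

lemma comm_group_Zp_power: "comm_group (Zp_power p t)"
proof (rule group.group_comm_groupI)
  show "group (Zp_power p t)"
    unfolding Zp_power_def by (rule product_group) simp
qed (auto simp: Zp_power_def add.commute)

lemma carrier_Zp_power: "p > 0 \<Longrightarrow> carrier (Zp_power p t) = (\<Pi>\<^sub>E j\<in>{..<t}. {0..<int p})"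
  by (simp add: Zp_power_def carrier_integer_mod_group)

lemma one_Zp_power: "\<one>\<^bsub>Zp_power p t\<^esub> = (\<lambda>j\<in>{..<t}. 0)"
  by (simp add: Zp_power_def)

lemma mult_Zp_power: "x \<otimes>\<^bsub>Zp_power p t\<^esub> y = (\<lambda>j\<in>{..<t}. (x j + y j) mod int p)"
  by (simp add: Zp_power_def)

locale char_p_field = field R for R (structure) +
  fixes p :: nat
  assumes prime_p: "prime p" and int_embed_char: "int_embed R (int p) = \<zero>"
begin

lemma int_embed_mod: "int_embed R a = int_embed R (a mod int p)"
proof -
  have "a = a mod int p + int p * (a div int p)"
    by simp
  then have "int_embed R a = int_embed R (a mod int p) \<oplus> int_embed R (int p) \<otimes> int_embed R (a div int p)"
    by (metis int_embed_add int_embed_mult)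
  then show ?thesis
    by (simp add: int_embed_char)
qed

lemma int_embed_invertible:
  assumes "\<not> int p dvd a"
  obtains u where "int_embed R u \<otimes> int_embed R a = \<one>"
proof -
  have "coprime a (int p)"
    using prime_imp_coprime[of "int p" a] assms prime_p by (simp add: coprime_commute)
  then obtain u where "[a * u = 1] (mod int p)"
    using cong_solve_coprime_int by blast
  then have "(a * u) mod int p = 1"
    using prime_gt_1_nat[OF prime_p] by (simp add: cong_def)
  then have "int_embed R (a * u) = \<one>"
    using int_embed_mod[of "a * u"] by simp
  then show ?thesis
    using that by (simp add: int_embed_mult m_comm)
qed

lemma int_embed_eq_0_iff: "int_embed R a = \<zero> \<longleftrightarrow> int p dvd a"
proof
  assume "int_embed R a = \<zero>"
  then show "int p dvd a"
    using int_embed_invertible[of a] by force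
next
  assume "int p dvd a"
  then show "int_embed R a = \<zero>"
    using int_embed_mod[of a] by simp
qed

lemma int_poly_eval_eq_0_if_dvd_coeffs:
  assumes z: "z \<in> carrier R" and dvd: "\<And>j. int p dvd Polynomial.coeff q j"
  shows "int_poly_eval R z q = \<zero>"
proof -
  have "q = smult (int p) (map_poly (\<lambda>c. c div int p) q)"
    using dvd by (intro poly_eqI) (simp add: coeff_map_poly)
  then show ?thesis
    by (metis int_poly_eval_smult[OF z] int_embed_char int_poly_eval_closed[OF z] l_null)
qed

lemma frobenius: "z \<in> carrier R \<Longrightarrow> int_poly_eval R z q [^] p = int_poly_eval R (z [^] p) q"
proof -
  assume z: "z \<in> carrier R"
  obtain s where s: "q ^ p = pcompose q (Polynomial.monom 1 p) + smult (int p) s"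
    using int_poly_power_prime[OF prime_p] .
  have "int_poly_eval R z q [^] p = int_poly_eval R z (q ^ p)"
    using z by (simp add: int_poly_eval_power)
  also have "\<dots> = int_poly_eval R (z [^] p) q"
    unfolding s using z
    by (simp add: int_poly_eval_add int_poly_eval_smult int_poly_eval_pcompose int_embed_char)
  finally show ?thesis .
qed

lemma frobenius_power:
  "z \<in> carrier R \<Longrightarrow> int_poly_eval R z q [^] (p ^ n) = int_poly_eval R (z [^] (p ^ n)) q"
proof (induction n)
  case (Suc n)
  have "int_poly_eval R z q [^] (p ^ Suc n) = (int_poly_eval R z q [^] (p ^ n)) [^] p"
    using Suc.prems by (simp add: nat_pow_pow mult.commute)
  also have "\<dots> = int_poly_eval R ((z [^] (p ^ n)) [^] p) q"
    using Suc by (simp add: frobenius)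
  finally show ?case
    using Suc.prems by (simp add: nat_pow_pow mult.commute)
qed simp

end

section \<open>Coordinates over the prime field\<close>

definition degree_below :: "nat \<Rightarrow> 'a::zero poly \<Rightarrow> bool" where
  "degree_below d q \<longleftrightarrow> (\<forall>j\<ge>d. Polynomial.coeff q j = 0)"

lemma degree_below_add: "degree_below d q \<Longrightarrow> degree_below d r \<Longrightarrow> degree_below d (q + r)"
  and degree_below_diff: "degree_below d q \<Longrightarrow> degree_below d r \<Longrightarrow> degree_below d (q - r)"
  and degree_below_smult: "degree_below d q \<Longrightarrow> degree_below d (smult c q)"
  by (simp_all add: degree_below_def)

locale frobenius_fixed = char_p_field +
  fixes t :: nat and w
  assumes t_pos: "t > 0" and w_closed: "w \<in> carrier R" and w_frobenius: "w [^] (p ^ t) = w"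
begin

lemma int_poly_eval_frobenius_fixed: "int_poly_eval R w q [^] (p ^ t) = int_poly_eval R w q"
  using frobenius_power[OF w_closed, of q t] w_frobenius by simp

text \<open>Linear independence of \<open>1, w, \<dots>, w^(d-1)\<close> over the prime field, whose elements are
  represented by integers modulo \<open>p\<close>.\<close>

definition powers_independent :: "nat \<Rightarrow> bool" where
  "powers_independent d \<longleftrightarrow>
     (\<forall>q. degree_below d q \<and> int_poly_eval R w q = \<zero> \<longrightarrow> (\<forall>j. int p dvd Polynomial.coeff q j))"

lemma inj_on_eval_combinations:
  assumes "powers_independent d"
  shows "inj_on (\<lambda>c. int_poly_eval R w (\<Sum>j<d. Polynomial.monom (c j) j)) (\<Pi>\<^sub>E j\<in>{..<d}. {0..<int p})"
proof (rule inj_onI)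
  fix c c' assume c: "c \<in> (\<Pi>\<^sub>E j\<in>{..<d}. {0..<int p})" "c' \<in> (\<Pi>\<^sub>E j\<in>{..<d}. {0..<int p})"
    and eq: "int_poly_eval R w (\<Sum>j<d. Polynomial.monom (c j) j)
      = int_poly_eval R w (\<Sum>j<d. Polynomial.monom (c' j) j)"
  define D where "D = (\<Sum>j<d. Polynomial.monom (c j) j) - (\<Sum>j<d. Polynomial.monom (c' j) j)"
  have coeff_D: "Polynomial.coeff D j = (if j < d then c j - c' j else 0)" for j
    unfolding D_def by (simp add: coeff_sum)
  have "degree_below d D"
    by (simp add: degree_below_def coeff_D)
  moreover have "int_poly_eval R w D = \<zero>"
    using eq w_closed by (simp add: D_def int_poly_eval_diff)
  ultimately have dvd: "int p dvd Polynomial.coeff D j" for j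
    using assms unfolding powers_independent_def by blast
  show "c = c'"
  proof (rule PiE_ext[OF c])
    fix j assume j: "j \<in> {..<d}"
    then have "c j mod int p = c' j mod int p"
      using dvd[of j] by (simp add: coeff_D mod_eq_dvd_iff)
    moreover have "c j mod int p = c j" "c' j mod int p = c' j"
      using PiE_mem[OF c(1) j] PiE_mem[OF c(2) j] by simp_all
    ultimately show "c j = c' j"
      by simp
  qed
qed

lemma powers_independent_le: "powers_independent d \<Longrightarrow> d \<le> t"
proof -
  assume indep: "powers_independent d"
  define A where "A = (\<Pi>\<^sub>E j\<in>{..<d}. {0..<int p})"
  have p_pow: "p ^ t \<ge> 2"
    using prime_ge_2_nat[OF prime_p] t_pos self_le_power[of p t] by linarith
  have "(\<lambda>c. int_poly_eval R w (\<Sum>j<d. Polynomial.monom (c j) j)) ` A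
      \<subseteq> {y \<in> carrier R. y [^] (p ^ t) = y}"
    using w_closed by (auto simp: int_poly_eval_frobenius_fixed)
  then have "card A \<le> card {y \<in> carrier R. y [^] (p ^ t) = y}"
    using card_inj_on_le inj_on_eval_combinations[OF indep] fixed_points_power_bound(1)[OF p_pow]
    unfolding A_def by blast
  also have "\<dots> \<le> p ^ t"
    by (rule fixed_points_power_bound(2)[OF p_pow])
  finally have "p ^ d \<le> p ^ t"
    unfolding A_def by (simp add: card_PiE)
  then show "d \<le> t"
    using power_le_imp_le_exp[OF prime_gt_1_nat[OF prime_p]] by simp
qed

definition span_dim :: nat where "span_dim = (GREATEST d. powers_independent d)"

lemma powers_independent_span_dim: "powers_independent span_dim"
proof -
  have "powers_independent 0"
    unfolding powers_independent_def degree_below_def by auto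
  then show ?thesis
    unfolding span_dim_def by (rule GreatestI_nat[where b = t]) (rule powers_independent_le)
qed

lemma span_dim_le: "span_dim \<le> t"
  by (rule powers_independent_le[OF powers_independent_span_dim])

lemma not_powers_independent_Suc_span_dim: "\<not> powers_independent (Suc span_dim)"
proof
  assume "powers_independent (Suc span_dim)"
  then have "Suc span_dim \<le> span_dim"
    unfolding span_dim_def by (rule Greatest_le_nat) (rule powers_independent_le)
  then show False by simp
qed

lemma int_poly_eval_eq_0_iff_dvd_coeffs:
  "degree_below span_dim q \<Longrightarrow> int_poly_eval R w q = \<zero> \<longleftrightarrow> (\<forall>j. int p dvd Polynomial.coeff q j)"
  using powers_independent_span_dim int_poly_eval_eq_0_if_dvd_coeffs[OF w_closed]
  unfolding powers_independent_def by blast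

lemma w_power_span_dim_in_span:
  obtains h where "degree_below span_dim h" "int_poly_eval R w h = w [^] span_dim"
proof -
  obtain S j0 where S: "degree_below (Suc span_dim) S" "int_poly_eval R w S = \<zero>"
    "\<not> int p dvd Polynomial.coeff S j0"
    using not_powers_independent_Suc_span_dim unfolding powers_independent_def by blast
  define c where "c = Polynomial.coeff S span_dim"
  define S' where "S' = S - Polynomial.monom c span_dim"
  have S': "degree_below span_dim S'"
    using S(1) unfolding degree_below_def S'_def c_def by (auto simp: Suc_le_eq)
  have "S = S' + Polynomial.monom c span_dim"
    unfolding S'_def by simp
  then have eval_S: "int_poly_eval R w S' \<oplus> int_embed R c \<otimes> w [^] span_dim = \<zero>"
    using S(2) w_closed by (simp add: int_poly_eval_add int_poly_eval_monom)
  have "\<not> int p dvd c"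
  proof
    assume "int p dvd c"
    then have "int_embed R c = \<zero>"
      by (simp add: int_embed_eq_0_iff)
    then have "int_poly_eval R w S' = \<zero>"
      using eval_S w_closed by simp
    then have S'_dvd: "int p dvd Polynomial.coeff S' j" for j
      using int_poly_eval_eq_0_iff_dvd_coeffs[OF S'] by blast
    have "int p dvd Polynomial.coeff S j" for j
      using S'_dvd[of j] \<open>int p dvd c\<close> unfolding S'_def c_def
      by (cases "j = span_dim") auto
    then show False
      using S(3) by blast
  qed
  then obtain u where u: "int_embed R u \<otimes> int_embed R c = \<one>"
    by (rule int_embed_invertible)
  have "\<ominus> int_poly_eval R w S' = int_embed R c \<otimes> w [^] span_dim"
    using eval_S w_closed by (intro minus_equality) (simp_all add: a_comm)
  then have "w [^] span_dim = int_embed R u \<otimes> (\<ominus> int_poly_eval R w S')"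
    using u w_closed by (metis int_embed_closed l_one m_assoc nat_pow_closed)
  also have "\<dots> = int_poly_eval R w (smult (- u) S')"
    using w_closed by (simp add: int_poly_eval_uminus int_poly_eval_smult r_minus)
  finally show ?thesis
    using that degree_below_smult[OF S'] by metis
qed

lemma exists_reduced: "\<exists>r. degree_below span_dim r \<and> int_poly_eval R w r = int_poly_eval R w q"
proof (induction q)
  case 0
  show ?case by (intro exI[of _ 0]) (simp add: degree_below_def)
next
  case (pCons a q)
  obtain r where r: "degree_below span_dim r" "int_poly_eval R w r = int_poly_eval R w q"
    using pCons.IH by blast
  obtain h where h: "degree_below span_dim h" "int_poly_eval R w h = w [^] span_dim"
    by (rule w_power_span_dim_in_span)
  define c where "c = Polynomial.coeff (pCons a r) span_dim"
  define r' where "r' = (pCons a r - Polynomial.monom c span_dim) + smult c h"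
  have "degree_below span_dim (pCons a r - Polynomial.monom c span_dim)"
    using r(1) unfolding degree_below_def c_def
    by (auto simp: coeff_pCons split: nat.splits)
  then have "degree_below span_dim r'"
    unfolding r'_def using h(1) by (intro degree_below_add degree_below_smult)
  moreover have "int_poly_eval R w r' = int_poly_eval R w (pCons a q)"
    using w_closed r(2) h(2)
    by (simp add: r'_def int_poly_eval_add int_poly_eval_diff int_poly_eval_smult
        int_poly_eval_monom int_poly_eval_pCons a_minus_def a_assoc l_neg)
  ultimately show ?case by blast
qed

definition reduced :: "int poly \<Rightarrow> int poly" where
  "reduced q = (SOME r. degree_below span_dim r \<and> int_poly_eval R w r = int_poly_eval R w q)"

lemma degree_below_reduced: "degree_below span_dim (reduced q)"
  and int_poly_eval_reduced: "int_poly_eval R w (reduced q) = int_poly_eval R w q"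
  using someI_ex[OF exists_reduced[of q]] unfolding reduced_def by blast+

text \<open>The coordinates of \<open>int_poly_eval R w q\<close> in the basis \<open>1, w, \<dots>, w^(span_dim - 1)\<close>.\<close>

definition coords :: "int poly \<Rightarrow> nat \<Rightarrow> int" where
  "coords q = (\<lambda>j\<in>{..<t}. if j < span_dim then Polynomial.coeff (reduced q) j mod int p else 0)"

lemma coords_closed: "coords q \<in> carrier (Zp_power p t)"
  using prime_gt_0_nat[OF prime_p] by (auto simp: coords_def carrier_Zp_power)

lemma coords_eq_iff: "coords q = coords r \<longleftrightarrow> int_poly_eval R w q = int_poly_eval R w r"
proof -
  have "coords q = coords r \<longleftrightarrow>
      (\<forall>j<span_dim. Polynomial.coeff (reduced q) j mod int p = Polynomial.coeff (reduced r) j mod int p)"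
    using span_dim_le unfolding coords_def by (auto simp: fun_eq_iff)
  also have "\<dots> \<longleftrightarrow> (\<forall>j. int p dvd Polynomial.coeff (reduced q - reduced r) j)"
    using degree_below_reduced[of q] degree_below_reduced[of r] unfolding degree_below_def
    by (metis coeff_diff mod_eq_dvd_iff not_le)
  also have "\<dots> \<longleftrightarrow> int_poly_eval R w (reduced q - reduced r) = \<zero>"
    by (simp add: int_poly_eval_eq_0_iff_dvd_coeffs degree_below_diff degree_below_reduced)
  also have "\<dots> \<longleftrightarrow> int_poly_eval R w q = int_poly_eval R w r"
    using w_closed by (simp add: int_poly_eval_diff int_poly_eval_reduced)
  finally show ?thesis .
qed

lemma coords_add: "coords (q + r) = coords q \<otimes>\<^bsub>Zp_power p t\<^esub> coords r"
proof -
  define D where "D = reduced (q + r) - (reduced q + reduced r)"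
  have "int_poly_eval R w D = \<zero>"
    using w_closed by (simp add: D_def int_poly_eval_diff int_poly_eval_add int_poly_eval_reduced)
  then have "int p dvd Polynomial.coeff D j" for j
    using int_poly_eval_eq_0_iff_dvd_coeffs degree_below_reduced
    by (metis D_def degree_below_add degree_below_diff)
  then have "Polynomial.coeff (reduced (q + r)) j mod int p
      = (Polynomial.coeff (reduced q) j mod int p + Polynomial.coeff (reduced r) j mod int p) mod int p" for j
    unfolding D_def by (simp add: mod_add_eq mod_eq_dvd_iff)
  then show ?thesis
    by (auto simp: coords_def mult_Zp_power intro!: restrict_ext)
qed

lemma coords_0: "coords 0 = \<one>\<^bsub>Zp_power p t\<^esub>"
proof -
  have "int p dvd Polynomial.coeff (reduced 0) j" for j
    using int_poly_eval_eq_0_iff_dvd_coeffs[OF degree_below_reduced] int_poly_eval_reduced[of 0] by simp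
  then show ?thesis
    by (auto simp: coords_def one_Zp_power intro!: restrict_ext)
qed

lemma coords_eq_one_iff: "coords q = \<one>\<^bsub>Zp_power p t\<^esub> \<longleftrightarrow> int_poly_eval R w q = \<zero>"
  using coords_eq_iff[of q 0] by (simp add: coords_0)

lemma finprod_coords:
  assumes "finite A"
  shows "finprod (Zp_power p t) (\<lambda>a. coords (f a)) A = coords (\<Sum>a\<in>A. f a)"
proof -
  interpret Z: comm_group "Zp_power p t"
    by (rule comm_group_Zp_power)
  show ?thesis
    using assms by (induction A rule: finite_induct) (simp_all add: coords_0 coords_closed coords_add)
qed

end

section \<open>Quadratic residues modulo a prime \<open>v \<equiv> 3 (mod 4)\<close>\<close>

lemma cong_sign_eq:
  fixes x y :: int
  assumes "m > 2" "x \<in> {-1, 0, 1}" "y \<in> {-1, 0, 1}" "[x = y] (mod int m)"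
  shows "x = y"
proof -
  have "int m dvd x - y"
    using assms(4) by (simp add: cong_iff_dvd_diff)
  moreover have "\<bar>x - y\<bar> < int m"
    using assms(1-3) by auto
  ultimately show ?thesis
    by (metis abs_of_nat dvd_imp_le_int eq_iff_diff_eq_0 linorder_not_less)
qed

lemma bij_betw_if_card_eq:
  assumes "inj_on f A" "f ` A \<subseteq> B" "card A = card B" "finite B"
  shows "bij_betw f A B"
  using assms card_image card_subset_eq unfolding bij_betw_def by metis

locale paley_prime =
  fixes v lam :: nat
  assumes prime_v: "prime v" and v_eq: "v = 4 * lam + 3"
begin

abbreviation chi :: "int \<Rightarrow> int" where "chi a \<equiv> Legendre a (int v)"

definition chi_class :: "int \<Rightarrow> nat set" where
  "chi_class e = {s. 1 \<le> s \<and> s < v \<and> chi (int s) = e}"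

abbreviation QR :: "nat set" where "QR \<equiv> chi_class 1"
abbreviation NQR :: "nat set" where "NQR \<equiv> chi_class (-1)"

lemma v_ge_3: "v \<ge> 3"
  using v_eq by simp

lemma chi_cong: "[a = b] (mod int v) \<Longrightarrow> chi a = chi b"
proof -
  assume ab: "[a = b] (mod int v)"
  then have "[a = 0] (mod int v) \<longleftrightarrow> [b = 0] (mod int v)"
    using cong_sym cong_trans by blast
  moreover have "QuadRes (int v) a \<longleftrightarrow> QuadRes (int v) b"
    unfolding QuadRes_def using ab cong_sym cong_trans by blast
  ultimately show ?thesis
    unfolding Legendre_def by simp
qed

lemma chi_range: "chi a \<in> {-1, 0, 1}"
  unfolding Legendre_def by auto

lemma chi_eq_0_iff: "chi a = 0 \<longleftrightarrow> int v dvd a"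
  unfolding Legendre_def by (auto simp: cong_0_iff)

lemma chi_euler: "[chi a = a ^ (2 * lam + 1)] (mod int v)"
proof -
  have "(v - 1) div 2 = 2 * lam + 1"
    using v_eq by simp
  then show ?thesis
    using euler_criterion[OF prime_v, of a] v_ge_3 by simp
qed

lemma chi_mult: "chi (a * b) = chi a * chi b"
proof -
  have "[chi a * chi b = (a * b) ^ (2 * lam + 1)] (mod int v)"
    unfolding power_mult_distrib by (intro cong_mult chi_euler)
  then have "[chi (a * b) = chi a * chi b] (mod int v)"
    using chi_euler cong_sym cong_trans by blast
  moreover have "chi a * chi b \<in> {-1, 0, 1}"
    using chi_range[of a] chi_range[of b] by auto
  ultimately show ?thesis
    using cong_sign_eq[of v "chi (a * b)" "chi a * chi b"] chi_range[of "a * b"] v_ge_3 by simp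
qed

text \<open>Here \<open>v \<equiv> 3 (mod 4)\<close> is essential: the Euler exponent \<open>(v - 1) / 2 = 2 lam + 1\<close> is odd.\<close>

lemma chi_minus_one: "chi (-1) = -1"
proof -
  have "[chi (-1) = -1] (mod int v)"
    using chi_euler[of "-1"] by simp
  then show ?thesis
    using cong_sign_eq[of v "chi (-1)" "-1"] chi_range[of "-1"] v_ge_3 by simp
qed

lemma chi_one: "chi 1 = 1"
  unfolding Legendre_def QuadRes_def using v_ge_3
  by (auto simp: cong_0_iff intro: exI[of _ 1])

lemma chi_nonzero: "1 \<le> s \<Longrightarrow> s < v \<Longrightarrow> chi (int s) = 1 \<or> chi (int s) = -1"
  using chi_range[of "int s"] chi_eq_0_iff[of "int s"] by (auto dest: zdvd_imp_le)

lemma chi_classes_Un: "QR \<union> NQR = {1..<v}"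
proof (intro equalityI subsetI)
  fix x assume "x \<in> {1..<v}"
  then show "x \<in> QR \<union> NQR"
    using chi_nonzero[of x] by (auto simp: chi_class_def)
qed (auto simp: chi_class_def)

lemma chi_classes_disjoint: "QR \<inter> NQR = {}"
  unfolding chi_class_def by auto

lemma finite_chi_class: "finite (chi_class e)"
  unfolding chi_class_def by auto

lemma chi_v_minus: "s < v \<Longrightarrow> chi (int (v - s)) = - chi (int s)"
proof -
  assume "s < v"
  then have "[int (v - s) = (-1) * int s] (mod int v)"
    unfolding cong_iff_lin by (intro exI[of _ "-1"]) simp
  then have "chi (int (v - s)) = chi (-1) * chi (int s)"
    by (metis chi_cong chi_mult)
  then show ?thesis
    by (simp add: chi_minus_one)
qed

lemma bij_betw_v_minus: "bij_betw (\<lambda>s. v - s) QR NQR"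
proof (rule bij_betw_imageI)
  show "inj_on (\<lambda>s. v - s) QR"
    unfolding chi_class_def by (intro inj_onI) auto
  show "(\<lambda>s. v - s) ` QR = NQR"
  proof (intro equalityI subsetI)
    fix n assume n: "n \<in> NQR"
    then have "v - n \<in> QR" "n = v - (v - n)"
      using chi_v_minus unfolding chi_class_def by auto
    then show "n \<in> (\<lambda>s. v - s) ` QR" by blast
  qed (use chi_v_minus in \<open>auto simp: chi_class_def\<close>)
qed

lemma card_QR: "card QR = 2 * lam + 1" and card_NQR: "card NQR = 2 * lam + 1"
proof -
  have "card QR = card NQR"
    by (rule bij_betw_same_card[OF bij_betw_v_minus])
  moreover have "card QR + card NQR = v - 1"
    using card_Un_disjoint[OF finite_chi_class finite_chi_class chi_classes_disjoint] chi_classes_Un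
    by simp
  ultimately show "card QR = 2 * lam + 1" "card NQR = 2 * lam + 1"
    using v_eq by auto
qed

lemma card_chi_class: "e \<in> {1, -1} \<Longrightarrow> card (chi_class e) = 2 * lam + 1"
  using card_QR card_NQR by auto

lemma coprime_less_v: "1 \<le> k \<Longrightarrow> k < v \<Longrightarrow> coprime k v"
proof -
  assume "1 \<le> k" "k < v"
  then have "\<not> v dvd k"
    by (auto dest: dvd_imp_le)
  then show "coprime k v"
    using prime_imp_coprime[OF prime_v] by (simp add: coprime_commute)
qed

lemma chi_mult_mod: "chi (int (x * k mod v)) = chi (int x) * chi (int k)"
proof -
  have "[int (x * k mod v) = int x * int k] (mod int v)"
    by (simp add: cong_def zmod_int)
  then show ?thesis
    using chi_cong chi_mult[of "int x" "int k"] by simp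
qed

lemma bij_betw_mult_mod:
  assumes k: "1 \<le> k" "k < v" and e: "e \<in> {1, -1}"
  shows "bij_betw (\<lambda>x. x * k mod v) (chi_class e) (chi_class (e * chi (int k)))"
proof (rule bij_betw_if_card_eq)
  have chi_k: "chi (int k) \<in> {1, -1}"
    using chi_nonzero[OF k] by auto
  show "inj_on (\<lambda>x. x * k mod v) (chi_class e)"
  proof (rule inj_onI)
    fix x y assume "x \<in> chi_class e" "y \<in> chi_class e" "x * k mod v = y * k mod v"
    then show "x = y"
      using cong_mult_rcancel_nat[OF coprime_less_v[OF k]] unfolding chi_class_def
      by (auto simp: cong_def)
  qed
  show "(\<lambda>x. x * k mod v) ` chi_class e \<subseteq> chi_class (e * chi (int k))"
  proof clarify
    fix x assume x: "x \<in> chi_class e"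
    then have "chi (int (x * k mod v)) = e * chi (int k)"
      by (simp add: chi_mult_mod chi_class_def)
    moreover have "\<not> v dvd x" "\<not> v dvd k"
      using x k by (auto simp: chi_class_def dest: dvd_imp_le)
    then have "x * k mod v \<noteq> 0"
      using prime_v prime_dvd_mult_iff by (auto simp: dvd_eq_mod_eq_0[symmetric])
    ultimately show "x * k mod v \<in> chi_class (e * chi (int k))"
      using v_ge_3 by (simp add: chi_class_def)
  qed
  show "card (chi_class e) = card (chi_class (e * chi (int k)))"
    using e chi_k by (auto simp: card_chi_class)
qed (rule finite_chi_class)

definition inverse_mod :: "nat \<Rightarrow> nat" where
  "inverse_mod m = (SOME y. 1 \<le> y \<and> y < v \<and> [m * y = 1] (mod v))"

lemma inverse_mod:
  assumes "1 \<le> m" "m < v"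
  shows "1 \<le> inverse_mod m" "inverse_mod m < v" "[m * inverse_mod m = 1] (mod v)"
proof -
  obtain x where "[m * x = Suc 0] (mod v)"
    using cong_solve_coprime_nat coprime_less_v[OF assms] by blast
  then have x: "[m * (x mod v) = 1] (mod v)"
    by (simp add: cong_def mod_mult_right_eq)
  have "x mod v \<noteq> 0"
  proof
    assume "x mod v = 0"
    then show False
      using x v_ge_3 by (simp add: cong_def)
  qed
  then have "\<exists>y. 1 \<le> y \<and> y < v \<and> [m * y = 1] (mod v)"
    using x v_ge_3 by (intro exI[of _ "x mod v"]) simp
  then show "1 \<le> inverse_mod m" "inverse_mod m < v" "[m * inverse_mod m = 1] (mod v)"
    unfolding inverse_mod_def by (metis (mono_tags, lifting) someI_ex)+
qed

lemma inj_on_inverse_mod: "inj_on inverse_mod {1..<v}"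
proof (rule inj_onI)
  fix m m' assume m: "m \<in> {1..<v}" "m' \<in> {1..<v}" "inverse_mod m = inverse_mod m'"
  then have "[m * inverse_mod m = m' * inverse_mod m] (mod v)"
    using inverse_mod(3) by (metis atLeastLessThan_iff cong_sym cong_trans)
  moreover have "coprime (inverse_mod m) v"
    using m inverse_mod(1,2) coprime_less_v by simp
  ultimately have "[m = m'] (mod v)"
    using cong_mult_rcancel_nat by blast
  then show "m = m'"
    using m by (simp add: cong_def)
qed

definition NQR_followed_by :: "int \<Rightarrow> nat set" where
  "NQR_followed_by e = {m \<in> NQR. m + 1 \<in> chi_class e}"

lemma v_minus_1_NQR: "v - 1 \<in> NQR"
  using chi_v_minus[of 1] chi_one v_ge_3 by (simp add: chi_class_def)

lemma NQR_eq_insert: "NQR = insert (v - 1) (NQR_followed_by 1 \<union> NQR_followed_by (-1))"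
proof (intro equalityI subsetI)
  fix m assume m: "m \<in> NQR"
  show "m \<in> insert (v - 1) (NQR_followed_by 1 \<union> NQR_followed_by (-1))"
  proof (cases "m = v - 1")
    case False
    then have "m + 1 \<in> {1..<v}"
      using m by (auto simp: chi_class_def)
    then have "m + 1 \<in> QR \<union> NQR"
      using chi_classes_Un by simp
    then show ?thesis
      using m by (auto simp: NQR_followed_by_def)
  qed simp
next
  fix m assume "m \<in> insert (v - 1) (NQR_followed_by 1 \<union> NQR_followed_by (-1))"
  then show "m \<in> NQR"
    using v_minus_1_NQR by (auto simp: NQR_followed_by_def)
qed

lemma v_minus_1_notin_NQR_followed_by: "v - 1 \<notin> NQR_followed_by e"
  using v_ge_3 by (simp add: NQR_followed_by_def chi_class_def)

lemma NQR_followed_by_disjoint: "NQR_followed_by 1 \<inter> NQR_followed_by (-1) = {}"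
  by (auto simp: NQR_followed_by_def chi_class_def)

lemma finite_NQR_followed_by: "finite (NQR_followed_by e)"
  using finite_chi_class by (simp add: NQR_followed_by_def)

text \<open>If \<open>m y \<equiv> 1\<close> then \<open>y\<close> is a non-residue like \<open>m\<close>, and \<open>y + 1 \<equiv> y (m + 1)\<close>.\<close>

lemma inverse_in_NQR_followed_by:
  assumes m: "m \<in> NQR_followed_by e" and y: "1 \<le> y" "y < v" "[m * y = 1] (mod v)"
  shows "y \<in> NQR_followed_by (- e)"
proof -
  have my: "[int m * int y = 1] (mod int v)"
    using y(3) by (metis cong_int_iff of_nat_1 of_nat_mult)
  have chi_m: "chi (int m) = -1" "chi (int (m + 1)) = e" "e \<noteq> 0"
    using m chi_nonzero[of "m + 1"] by (auto simp: NQR_followed_by_def chi_class_def)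
  have "chi (int m) * chi (int y) = 1"
    using chi_cong[OF my] chi_mult chi_one by simp
  then have chi_y: "chi (int y) = -1"
    using chi_m by simp
  have "[int (y + 1) = int y * int (m + 1)] (mod int v)"
    using cong_add_lcancel[of "int y", THEN iffD2, OF my] by (simp add: algebra_simps cong_sym_eq)
  then have chi_y1: "chi (int (y + 1)) = - e"
    using chi_cong chi_mult chi_y chi_m by simp
  then have "y + 1 \<noteq> v"
    using chi_m chi_eq_0_iff[of "int v"] by auto
  then show ?thesis
    using y chi_y chi_y1 by (auto simp: NQR_followed_by_def chi_class_def)
qed

lemma card_NQR_followed_by_le: "card (NQR_followed_by e) \<le> card (NQR_followed_by (- e))"
proof (rule card_inj_on_le[OF _ _ finite_NQR_followed_by])
  have "NQR_followed_by e \<subseteq> {1..<v}"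
    by (auto simp: NQR_followed_by_def chi_class_def)
  then show "inj_on inverse_mod (NQR_followed_by e)"
    using inj_on_inverse_mod by (rule inj_on_subset[rotated])
  show "inverse_mod ` NQR_followed_by e \<subseteq> NQR_followed_by (- e)"
  proof clarify
    fix m assume m: "m \<in> NQR_followed_by e"
    then have "1 \<le> m" "m < v"
      by (auto simp: NQR_followed_by_def chi_class_def)
    then show "inverse_mod m \<in> NQR_followed_by (- e)"
      using inverse_in_NQR_followed_by[OF m] inverse_mod by blast
  qed
qed

lemma card_NQR_followed_by: "e \<in> {1, -1} \<Longrightarrow> card (NQR_followed_by e) = lam"
proof -
  have "card (NQR_followed_by 1) = card (NQR_followed_by (-1))"
    using card_NQR_followed_by_le[of 1] card_NQR_followed_by_le[of "-1"] by simp
  moreover have "card NQR = card (NQR_followed_by 1) + card (NQR_followed_by (-1)) + 1"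
    using NQR_followed_by_disjoint v_minus_1_notin_NQR_followed_by
    by (subst NQR_eq_insert) (simp add: card_Un_disjoint finite_NQR_followed_by)
  ultimately show "e \<in> {1, -1} \<Longrightarrow> card (NQR_followed_by e) = lam"
    using card_NQR by auto
qed

end

section \<open>Residue sums at roots of unity\<close>

definition ones_poly :: "nat \<Rightarrow> int poly" where
  "ones_poly n = (\<Sum>i<n. Polynomial.monom 1 i)"

lemma ones_poly_mult: "(Polynomial.monom 1 1 - 1) * ones_poly n = Polynomial.monom 1 n - 1"
  by (induction n) (simp_all add: ones_poly_def monom_0 algebra_simps mult_monom)

lemma (in monoid) pow_eq_pow_mod:
  fixes m n :: nat
  assumes "x \<in> carrier G" "x [^] m = \<one>"
  shows "x [^] n = x [^] (n mod m)"
proof -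
  have "n = m * (n div m) + n mod m"
    by simp
  then have "x [^] n = (x [^] m) [^] (n div m) \<otimes> x [^] (n mod m)"
    using assms(1) by (metis nat_pow_mult nat_pow_pow)
  then show ?thesis
    using assms by simp
qed

context paley_prime
begin

definition chi_poly :: "int \<Rightarrow> int poly" where
  "chi_poly e = (\<Sum>s\<in>chi_class e. Polynomial.monom 1 s)"

lemma ones_poly_eq_chi_polys: "ones_poly v = 1 + chi_poly 1 + chi_poly (-1)"
proof -
  have "{..<v} = insert 0 {1..<v}"
    using v_ge_3 by auto
  then have "ones_poly v = Polynomial.monom 1 0 + (\<Sum>s\<in>QR \<union> NQR. Polynomial.monom 1 s)"
    unfolding ones_poly_def chi_classes_Un by simp
  then show ?thesis
    unfolding chi_poly_def
    by (simp add: sum.union_disjoint finite_chi_class chi_classes_disjoint monom_0 one_pCons add.assoc)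
qed

lemma sum_QR_multiples:
  assumes "m \<in> NQR" "m \<noteq> v - 1"
  shows "(\<Sum>a\<in>QR. Polynomial.monom 1 (a * (m + 1) mod v)) = chi_poly (chi (int (m + 1)))"
proof -
  have "1 \<le> m + 1" "m + 1 < v"
    using assms by (auto simp: chi_class_def)
  then have "bij_betw (\<lambda>a. a * (m + 1) mod v) QR (chi_class (chi (int (m + 1))))"
    using bij_betw_mult_mod[of "m + 1" 1] by simp
  then show ?thesis
    unfolding chi_poly_def by (rule sum.reindex_bij_betw)
qed

lemma sum_NQR_QR_multiples:
  "(\<Sum>m\<in>NQR. \<Sum>a\<in>QR. Polynomial.monom 1 (a * (m + 1) mod v))
     = of_nat (lam + 1) + of_nat lam * ones_poly v"
proof -
  define f where "f m = (\<Sum>a\<in>QR. Polynomial.monom (1::int) (a * (m + 1) mod v))" for m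
  have "f (v - 1) = of_nat (2 * lam + 1)"
    using v_ge_3 card_QR by (simp add: f_def of_nat_poly monom_0)
  moreover have "f m = chi_poly e" if "m \<in> NQR_followed_by e" for m e
    using that sum_QR_multiples v_minus_1_notin_NQR_followed_by
    unfolding f_def NQR_followed_by_def chi_class_def by fastforce
  ultimately have "(\<Sum>m\<in>NQR. f m)
      = of_nat (2 * lam + 1) + of_nat (card (NQR_followed_by 1)) * chi_poly 1
        + of_nat (card (NQR_followed_by (-1))) * chi_poly (-1)"
    using NQR_followed_by_disjoint v_minus_1_notin_NQR_followed_by
    by (subst NQR_eq_insert) (simp add: sum.union_disjoint finite_NQR_followed_by add.assoc)
  also have "\<dots> = of_nat (lam + 1) + of_nat lam * ones_poly v"
    by (simp add: card_NQR_followed_by ones_poly_eq_chi_polys algebra_simps)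
  finally show ?thesis
    unfolding f_def .
qed

end

locale paley_root = paley_prime v lam + cring L
  for v lam :: nat and L (structure) +
  fixes z assumes z_closed: "z \<in> carrier L" and z_pow_v: "z [^] v = \<one>"
begin

lemma int_poly_eval_monom_mod:
  "int_poly_eval L z (Polynomial.monom 1 n) = int_poly_eval L z (Polynomial.monom 1 (n mod v))"
  using pow_eq_pow_mod[OF z_closed z_pow_v] z_closed by simp

text \<open>Substituting \<open>b = m a\<close> with \<open>m \<in> NQR\<close> turns the product into the sum over \<open>m\<close> of the
  dilates of \<open>chi_poly 1\<close> by \<open>m + 1\<close>.\<close>

lemma int_poly_eval_QR_times_NQR:
  "int_poly_eval L z (chi_poly 1 * chi_poly (-1))
     = int_poly_eval L z (of_nat (lam + 1) + of_nat lam * ones_poly v)"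
proof -
  have "chi_poly 1 * chi_poly (-1) = (\<Sum>a\<in>QR. \<Sum>b\<in>NQR. Polynomial.monom 1 (a + b))"
    unfolding chi_poly_def sum_product by (simp add: mult_monom)
  also have "int_poly_eval L z \<dots>
      = int_poly_eval L z (\<Sum>a\<in>QR. \<Sum>m\<in>NQR. Polynomial.monom 1 (a * (m + 1) mod v))"
  proof (rule int_poly_eval_sum_cong[OF z_closed finite_chi_class])
    fix a assume a: "a \<in> QR"
    then have "1 \<le> a" "a < v" "chi (int a) = 1"
      by (auto simp: chi_class_def)
    then have "bij_betw (\<lambda>m. m * a mod v) NQR NQR"
      using bij_betw_mult_mod[of a "-1"] by simp
    then have "(\<Sum>b\<in>NQR. Polynomial.monom (1::int) (a + b))
        = (\<Sum>m\<in>NQR. Polynomial.monom 1 (a + m * a mod v))"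
      by (rule sum.reindex_bij_betw[symmetric])
    also have "int_poly_eval L z \<dots>
        = int_poly_eval L z (\<Sum>m\<in>NQR. Polynomial.monom 1 (a * (m + 1) mod v))"
    proof (rule int_poly_eval_sum_cong[OF z_closed finite_chi_class])
      fix m
      have "(a + m * a mod v) mod v = a * (m + 1) mod v"
        by (simp add: mod_add_right_eq algebra_simps)
      then show "int_poly_eval L z (Polynomial.monom 1 (a + m * a mod v))
          = int_poly_eval L z (Polynomial.monom 1 (a * (m + 1) mod v))"
        by (metis int_poly_eval_monom_mod)
    qed
    finally show "int_poly_eval L z (\<Sum>b\<in>NQR. Polynomial.monom 1 (a + b))
        = int_poly_eval L z (\<Sum>m\<in>NQR. Polynomial.monom 1 (a * (m + 1) mod v))" .
  qed
  also have "(\<Sum>a\<in>QR. \<Sum>m\<in>NQR. Polynomial.monom (1::int) (a * (m + 1) mod v))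
      = of_nat (lam + 1) + of_nat lam * ones_poly v"
    by (subst sum.swap) (rule sum_NQR_QR_multiples)
  finally show ?thesis .
qed

lemma int_poly_eval_QR_inverse:
  "int_poly_eval L (z [^] (v - 1)) (chi_poly 1) = int_poly_eval L z (chi_poly (-1))"
proof -
  have "int_poly_eval L (z [^] (v - 1)) (chi_poly 1)
      = int_poly_eval L z (pcompose (chi_poly 1) (Polynomial.monom 1 (v - 1)))"
    using z_closed by (simp add: int_poly_eval_pcompose)
  also have "pcompose (chi_poly 1) (Polynomial.monom 1 (v - 1))
      = (\<Sum>s\<in>QR. pcompose (Polynomial.monom 1 s) (Polynomial.monom 1 (v - 1)))"
    unfolding chi_poly_def by (rule pcompose_sum)
  also have "int_poly_eval L z \<dots> = int_poly_eval L z (\<Sum>s\<in>QR. Polynomial.monom 1 (v - s))"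
  proof (rule int_poly_eval_sum_cong[OF z_closed finite_chi_class])
    fix s assume "s \<in> QR"
    then have s: "1 \<le> s" "s < v"
      by (auto simp: chi_class_def)
    then have "int ((v - 1) * s) = int ((v - s) + v * (s - 1))"
      by (simp add: algebra_simps)
    then have "(v - 1) * s mod v = ((v - s) + v * (s - 1)) mod v"
      by (simp only: of_nat_eq_iff)
    also have "\<dots> = v - s"
      using s by (simp only: mod_mult_self2) simp
    finally have "(v - 1) * s mod v = v - s" .
    then show "int_poly_eval L z (pcompose (Polynomial.monom 1 s) (Polynomial.monom 1 (v - 1)))
        = int_poly_eval L z (Polynomial.monom 1 (v - s))"
      using z_closed int_poly_eval_monom_mod[of "(v - 1) * s"]
      by (simp add: int_poly_eval_pcompose nat_pow_pow mult.commute)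
  qed
  also have "(\<Sum>s\<in>QR. Polynomial.monom 1 (v - s)) = chi_poly (-1)"
    unfolding chi_poly_def by (rule sum.reindex_bij_betw[OF bij_betw_v_minus])
  finally show ?thesis .
qed

end

section \<open>Additivity of the Paley design\<close>

lemma (in monoid) inj_on_pow_prime_root_of_unity:
  assumes v: "prime v" and x: "x \<in> carrier G" "x [^] v = \<one>" "x \<noteq> \<one>"
  shows "inj_on (\<lambda>i::nat. x [^] i) {..<v}"
proof -
  have pow_ne_one: "x [^] k \<noteq> \<one>" if k: "1 \<le> k" "k < v" for k :: nat
  proof
    assume xk: "x [^] k = \<one>"
    have "\<not> v dvd k"
      using k by (auto dest: dvd_imp_le)
    then have "coprime k v"
      using prime_imp_coprime[OF v] by (simp add: coprime_commute)
    then obtain y where "[k * y = 1] (mod v)"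
      using cong_solve_coprime_nat by auto
    then have "k * y mod v = 1"
      using prime_gt_1_nat[OF v] by (simp add: cong_def)
    then have "x = x [^] (k * y)"
      using pow_eq_pow_mod[OF x(1,2), of "k * y"] x(1) by simp
    also have "\<dots> = \<one>"
      using xk x(1) by (simp add: nat_pow_pow[symmetric])
    finally show False
      using x(3) by contradiction
  qed
  have "x [^] i \<noteq> x [^] j" if "i < j" "j < v" for i j :: nat
  proof
    assume "x [^] i = x [^] j"
    then have "x [^] (i + (v - j)) = x [^] (j + (v - j))"
      using x(1) by (simp add: nat_pow_mult[symmetric])
    then have "x [^] (i + (v - j)) = \<one>"
      using that x(2) by simp
    moreover have "1 \<le> i + (v - j)" "i + (v - j) < v"
      using that by auto
    ultimately show False
      using pow_ne_one by blast
  qed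
  then show ?thesis
    by (intro inj_onI) (metis lessThan_iff linorder_neqE_nat)
qed

lemma (in cring) eval_replicate_one:
  assumes "z \<in> carrier R"
  shows "eval (replicate n \<one>) z = int_poly_eval R z (ones_poly n)"
  by (induction n) (simp_all add: assms ones_poly_def int_poly_eval_add a_comm)

lemma ring_hom_add_pow_one:
  assumes "ring R" "ring S" "h \<in> ring_hom R S"
  shows "h (add_pow R (n::nat) \<one>\<^bsub>R\<^esub>) = add_pow S n \<one>\<^bsub>S\<^esub>"
proof -
  interpret R: ring R by fact
  interpret S: ring S by fact
  show ?thesis
  proof (induction n)
    case 0
    then show ?case
      using ring_hom_zero[OF assms(3,1,2)] by simp
  next
    case (Suc n)
    then show ?case
      using ring_hom_add[OF assms(3)] ring_hom_one[OF assms(3)]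
      by simp
  qed
qed

lemma residue_ring_add_pow_one:
  assumes "prime p"
  shows "add_pow (residue_ring (int p)) p \<one>\<^bsub>residue_ring (int p)\<^esub> = \<zero>\<^bsub>residue_ring (int p)\<^esub>"
proof -
  interpret residues_prime p "residue_ring (int p)"
    by unfold_locales (simp_all add: assms)
  have "add_pow (residue_ring (int p)) n \<one>\<^bsub>residue_ring (int p)\<^esub> = int n mod int p" for n
    by (induction n)
      (simp_all add: res_zero_eq res_add_eq res_one_eq mod_add_right_eq add.commute)
  then show ?thesis
    by (simp add: res_zero_eq)
qed

text \<open>The field is the algebraic closure of the prime field, whose carrier type is fixed by the
  HOL-Algebra construction of algebraic closures.\<close>

lemma exists_char_p_field_with_root:
  assumes p: "prime p" and v: "v \<ge> 2"
  obtains L :: "((int list \<times> nat) multiset \<Rightarrow> int) ring" and \<zeta>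
  where "char_p_field L p" "\<zeta> \<in> carrier L" "int_poly_eval L \<zeta> (ones_poly v) = \<zero>\<^bsub>L\<^esub>"
proof -
  let ?F = "residue_ring (int p)"
  interpret F: residues_prime p ?F
    by unfold_locales (simp_all add: p)
  obtain L :: "((int list \<times> nat) multiset \<Rightarrow> int) ring"
    where alg: "algebraic_closure L (F.indexed_const ` carrier ?F)"
      and hom: "F.indexed_const \<in> ring_hom ?F L"
    using field.exists_closure[OF F.is_field] by blast
  interpret L: algebraic_closure L "F.indexed_const ` carrier ?F"
    by (rule alg)
  have "int_embed L (int p) = F.indexed_const (add_pow ?F p \<one>\<^bsub>?F\<^esub>)"
    unfolding int_embed_def add_pow_int_ge[of "int p", simplified]
    by (rule ring_hom_add_pow_one[symmetric]) (use hom F.ring_axioms L.ring_axioms in auto)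
  also have "\<dots> = \<zero>\<^bsub>L\<^esub>"
    using residue_ring_add_pow_one[OF p] ring_hom_zero[OF hom F.ring_axioms L.ring_axioms] by simp
  finally have char_p: "char_p_field L p"
    by unfold_locales (rule p)
  define P where "P = replicate v \<one>\<^bsub>L\<^esub>"
  have "\<one>\<^bsub>L\<^esub> \<in> F.indexed_const ` carrier ?F"
    using ring_hom_one[OF hom] F.one_closed by (metis image_eqI)
  then have "P \<in> carrier ((F.indexed_const ` carrier ?F) [X]\<^bsub>L\<^esub>)"
    unfolding univ_poly_carrier[symmetric] polynomial_def P_def using v by auto
  then have "L.splitted P"
    by (rule L.roots_over_subfield)
  moreover have P: "P \<in> carrier (poly_ring L)"
    unfolding univ_poly_carrier[symmetric] polynomial_def P_def using v by auto
  ultimately have "size (L.roots P) = v - 1"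
    unfolding L.splitted_def P_def by simp
  then have "L.roots P \<noteq> {#}"
    using v by auto
  then obtain \<zeta> where "\<zeta> \<in># L.roots P"
    by blast
  then have \<zeta>: "\<zeta> \<in> carrier L" "L.eval P \<zeta> = \<zero>\<^bsub>L\<^esub>"
    using L.roots_mem_iff_is_root[OF P] unfolding L.is_root_def by auto
  then have "int_poly_eval L \<zeta> (ones_poly v) = \<zero>\<^bsub>L\<^esub>"
    using L.eval_replicate_one[OF \<zeta>(1)] unfolding P_def by simp
  then show ?thesis
    by (rule that[OF char_p \<zeta>(1)])
qed

context paley_prime
begin

lemma nonzero_squares_eq: "nonzero_squares v = int ` QR"
proof -
  have "chi s = 1 \<longleftrightarrow> QuadRes (int v) s" if "1 \<le> s" "s < int v" for s
    using that chi_eq_0_iff[of s] by (auto simp: Legendre_def cong_0_iff dest: zdvd_imp_le)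
  then have "nonzero_squares v = {s \<in> {1..<int v}. chi s = 1}"
    unfolding nonzero_squares_def by auto
  also have "\<dots> = int ` QR"
    unfolding chi_class_def by (auto intro!: image_eqI[of _ int "nat _"])
  finally show ?thesis .
qed

end

locale paley_coords = paley_root v lam L \<omega> + frobenius_fixed L p t \<omega>
  for v lam :: nat and L (structure) and p t :: nat and \<omega> +
  assumes \<omega>_ne_one: "\<omega> \<noteq> \<one>" and QR_sum_eq_0: "int_poly_eval L \<omega> (chi_poly 1) = \<zero>"
begin

definition point_coords :: "int \<Rightarrow> nat \<Rightarrow> int" where
  "point_coords x = coords (Polynomial.monom 1 (nat x))"

lemma point_coords_closed: "point_coords x \<in> carrier (Zp_power p t)"
  by (simp add: point_coords_def coords_closed)

lemma inj_on_point_coords: "inj_on point_coords (paley_points v)"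
proof (rule inj_onI)
  fix x y assume xy: "x \<in> paley_points v" "y \<in> paley_points v" "point_coords x = point_coords y"
  then have "\<omega> [^] nat x = \<omega> [^] nat y"
    using w_closed by (simp add: point_coords_def coords_eq_iff)
  then have "nat x = nat y"
    using inj_on_pow_prime_root_of_unity[OF prime_v w_closed z_pow_v \<omega>_ne_one] xy(1,2)
    by (auto simp: paley_points_def inj_on_def)
  then show "x = y"
    using xy(1,2) by (simp add: paley_points_def eq_nat_nat_iff)
qed

lemma finprod_point_coords_block:
  assumes "B \<in> paley_blocks v"
  shows "finprod (Zp_power p t) point_coords B = \<one>\<^bsub>Zp_power p t\<^esub>"
proof -
  obtain i where i: "i \<in> {0..<int v}" "B = (\<lambda>s. (s + i) mod int v) ` int ` QR"
    using assms unfolding paley_blocks_def nonzero_squares_eq by blast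
  define g where "g s = (s + nat i) mod v" for s
  have B: "B = int ` g ` QR"
    unfolding i(2) image_image g_def using i(1) by (simp add: zmod_int)
  have "inj_on (int \<circ> g) QR"
    by (rule inj_onI) (auto simp: g_def chi_class_def cong_def[symmetric] cong_add_rcancel_nat
        dest!: cong_less_modulus_unique_nat)
  then have "finprod (Zp_power p t) point_coords B
      = finprod (Zp_power p t) (\<lambda>s. coords (Polynomial.monom 1 (g s))) QR"
    unfolding B image_comp
    by (subst comm_monoid.finprod_reindex[OF comm_group.axioms(1)[OF comm_group_Zp_power]])
      (auto simp: point_coords_def coords_closed)
  also have "\<dots> = coords (\<Sum>s\<in>QR. Polynomial.monom 1 (g s))"
    by (rule finprod_coords[OF finite_chi_class])
  also have "\<dots> = \<one>\<^bsub>Zp_power p t\<^esub>"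
  proof -
    have "int_poly_eval L \<omega> (\<Sum>s\<in>QR. Polynomial.monom 1 (g s))
        = int_poly_eval L \<omega> (Polynomial.monom 1 (nat i) * chi_poly 1)"
      unfolding chi_poly_def sum_distrib_left mult_monom g_def
      by (rule int_poly_eval_sum_cong[OF w_closed finite_chi_class])
        (simp add: add.commute int_poly_eval_monom_mod[of "_ + nat i"])
    also have "\<dots> = \<zero>"
      using w_closed QR_sum_eq_0 by (simp add: int_poly_eval_mult)
    finally show ?thesis
      by (simp add: coords_eq_one_iff)
  qed
  finally show ?thesis .
qed

lemma additive_under_Zp_power: "additive_under (Zp_power p t) (paley_points v) (paley_blocks v)"
  unfolding additive_under_def
  using point_coords_closed inj_on_point_coords finprod_point_coords_block by blast

end

locale paley_char_p = paley_prime v lam + char_p_field L p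
  for v lam :: nat and L (structure) and p :: nat +
  assumes p_dvd: "p dvd lam + 1"
begin

lemma p_not_dvd_v: "\<not> p dvd v"
proof
  assume "p dvd v"
  then have "p = 1 \<or> p = v"
    using prime_v unfolding prime_nat_iff by blast
  then have "p = v"
    using prime_gt_1_nat[OF prime_p] by auto
  moreover have "p \<le> lam + 1"
    using p_dvd by (simp add: dvd_imp_le)
  ultimately show False
    using v_eq by simp
qed

lemma ones_poly_root:
  assumes \<zeta>: "\<zeta> \<in> carrier L" "int_poly_eval L \<zeta> (ones_poly v) = \<zero>"
  shows "\<zeta> [^] v = \<one>" and "\<zeta> \<noteq> \<one>"
proof -
  have "int_poly_eval L \<zeta> ((Polynomial.monom 1 1 - 1) * ones_poly v) = \<zero>"
    using \<zeta> by (simp add: int_poly_eval_mult)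
  then have "int_poly_eval L \<zeta> (Polynomial.monom 1 v - 1) = \<zero>"
    unfolding ones_poly_mult .
  then show "\<zeta> [^] v = \<one>"
    using \<zeta>(1) by (simp add: int_poly_eval_diff)
  show "\<zeta> \<noteq> \<one>"
  proof
    assume "\<zeta> = \<one>"
    then have "int_poly_eval L \<zeta> (ones_poly v) = int_poly_eval L \<zeta> (\<Sum>i<v. 1)"
      unfolding ones_poly_def by (intro int_poly_eval_sum_cong[OF \<zeta>(1)]) simp_all
    also have "(\<Sum>i<v. 1) = (of_nat v :: int poly)"
      by simp
    finally have "int_embed L (int v) = \<zero>"
      using \<zeta> by simp
    then show False
      using p_not_dvd_v by (simp add: int_embed_eq_0_iff)
  qed
qed

lemma exists_root_chi_poly_eq_0:
  assumes \<zeta>: "\<zeta> \<in> carrier L" "int_poly_eval L \<zeta> (ones_poly v) = \<zero>"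
  obtains \<omega> where "\<omega> \<in> carrier L" "\<omega> [^] v = \<one>" "\<omega> \<noteq> \<one>"
    "int_poly_eval L \<omega> (chi_poly 1) = \<zero>"
proof -
  note \<zeta>_pow_v = ones_poly_root(1)[OF \<zeta>] and \<zeta>_ne_one = ones_poly_root(2)[OF \<zeta>]
  interpret paley_root v lam L \<zeta>
    by (intro paley_root.intro paley_root_axioms.intro paley_prime_axioms cring_axioms \<zeta>(1) \<zeta>_pow_v)
  have "int p dvd int (lam + 1)"
    using p_dvd by (simp only: int_dvd_int_iff)
  then have "int_embed L (int (lam + 1)) = \<zero>"
    by (simp only: int_embed_eq_0_iff)
  then have "int_poly_eval L \<zeta> (chi_poly 1) \<otimes> int_poly_eval L \<zeta> (chi_poly (-1)) = \<zero>"
    using int_poly_eval_QR_times_NQR \<zeta> by (simp add: int_poly_eval_mult int_poly_eval_add int_embed_add)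
  then have "int_poly_eval L \<zeta> (chi_poly 1) = \<zero> \<or> int_poly_eval L \<zeta> (chi_poly (-1)) = \<zero>"
    using integral \<zeta>(1) by simp
  then consider "int_poly_eval L \<zeta> (chi_poly 1) = \<zero>" | "int_poly_eval L \<zeta> (chi_poly (-1)) = \<zero>"
    by blast
  then show ?thesis
  proof cases
    case 1
    then show ?thesis
      using that \<zeta>(1) \<zeta>_pow_v \<zeta>_ne_one by blast
  next
    case 2
    have "\<zeta> [^] (v - 1) \<otimes> \<zeta> = \<zeta> [^] Suc (v - 1)"
      using \<zeta>(1) by simp
    then have "\<zeta> [^] (v - 1) \<otimes> \<zeta> = \<one>"
      using \<zeta>_pow_v v_ge_3 by simp
    then have "\<zeta> [^] (v - 1) \<noteq> \<one>"
      using \<zeta>(1) \<zeta>_ne_one by auto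
    moreover have "(\<zeta> [^] (v - 1)) [^] v = (\<zeta> [^] v) [^] (v - 1)"
      using \<zeta>(1) by (simp add: nat_pow_pow mult.commute)
    ultimately show ?thesis
      using that[of "\<zeta> [^] (v - 1)"] 2 \<zeta>(1) \<zeta>_pow_v int_poly_eval_QR_inverse by simp
  qed
qed

lemma additive_under_if_root:
  assumes \<omega>: "\<omega> \<in> carrier L" "\<omega> [^] v = \<one>" "\<omega> \<noteq> \<one>" "int_poly_eval L \<omega> (chi_poly 1) = \<zero>"
    and t: "t > 0" "[p ^ t = 1] (mod v)"
  shows "additive_under (Zp_power p t) (paley_points v) (paley_blocks v)"
proof -
  have "\<omega> [^] (p ^ t) = \<omega>"
    using pow_eq_pow_mod[OF \<omega>(1,2), of "p ^ t"] t(2) v_ge_3 \<omega>(1) by (simp add: cong_def)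
  then interpret paley_coords v lam L p t \<omega>
    by (intro paley_coords.intro paley_coords_axioms.intro paley_root.intro paley_root_axioms.intro
        frobenius_fixed.intro frobenius_fixed_axioms.intro paley_prime_axioms cring_axioms
        char_p_field_axioms t(1) \<omega>)
  show ?thesis
    by (rule additive_under_Zp_power)
qed

end

theorem corollary3p4:
  fixes v lam p :: nat
  assumes "prime v" and "v = 4 * lam + 3"
    and "prime p" and "p dvd lam + 1"
  shows "additive_under (Zp_power p (ord v p)) (paley_points v) (paley_blocks v)"
proof -
  obtain L :: "((int list \<times> nat) multiset \<Rightarrow> int) ring" and \<zeta>
    where L: "char_p_field L p" and \<zeta>: "\<zeta> \<in> carrier L" "int_poly_eval L \<zeta> (ones_poly v) = \<zero>\<^bsub>L\<^esub>"
    using exists_char_p_field_with_root[OF assms(3), of v] assms(2) by auto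
  interpret paley_char_p v lam L p
    using assms L by (intro paley_char_p.intro paley_char_p_axioms.intro paley_prime.intro) auto
  obtain \<omega> where \<omega>: "\<omega> \<in> carrier L" "\<omega> [^]\<^bsub>L\<^esub> v = \<one>\<^bsub>L\<^esub>" "\<omega> \<noteq> \<one>\<^bsub>L\<^esub>"
    "int_poly_eval L \<omega> (chi_poly 1) = \<zero>\<^bsub>L\<^esub>"
    using exists_root_chi_poly_eq_0[OF \<zeta>] by blast
  have "coprime v p"
    using prime_imp_coprime[OF prime_p p_not_dvd_v] by (simp add: coprime_commute)
  then have "ord v p > 0" "[p ^ ord v p = 1] (mod v)"
    using coprime_ord by auto
  then show ?thesis
    using additive_under_if_root[OF \<omega>] by blast
qed

end
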